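(* Let $(A,\cdot,\alpha)$ be a nearly Hom-associative algebra over a field $\mathbb{K}$ of characteristic $0$, let $V$ be a finite-dimensional linear space over $\mathbb{K}$, and let $l,r:A\to\mathrm{End}(V)$ be linear maps and $\varphi\in\mathrm{End}(V)$ such that $(l,r,V,\varphi)$ is a bimodule of $(A,\cdot,\alpha)$. Then the linear map $l-r:A\to\mathrm{End}(V)$, $x\mapsto l(x)-r(x)$, is a representation of the underlying Hom-Lie algebra $(A,[\cdot,\cdot],\alpha)$, $[x,y]=x\cdot y-y\cdot x$, on $V$ with respect to $\varphi$; i.e. for all $x,y\in A$: $(l-r)(\alpha(x))\circ\varphi=\varphi\circ(l-r)(x)$ and $(l-r)([x,y])\circ\varphi=(l-r)(\alpha(x))\circ(l-r)(y)-(l-r)(\alpha(y))\circ(l-r)(x)$.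
   Context: A nearly Hom-associative algebra is a triple $(A,\cdot,\alpha)$ with bilinear product $\cdot$ and linear $\alpha:A\to A$ such that $\alpha(x)\cdot(y\cdot z)=(z\cdot x)\cdot\alpha(y)$ for all $x,y,z$; its commutator bracket gives a Hom-Lie algebra $(A,[\cdot,\cdot],\alpha)$. A bimodule of $(A,\cdot,\alpha)$ is a quadruple $(l,r,V,\varphi)$ with $V$ a linear space, $l,r:A\to\mathrm{End}(V)$ linear and $\varphi\in\mathrm{End}(V)$ such that for all $x,y\in A$: $\varphi\circ l(x)=l(\alpha(x))\circ\varphi$, $\varphi\circ r(x)=r(\alpha(x))\circ\varphi$, $l(\alpha(x))\circ l(y)=r(\alpha(y))\circ r(x)$, $l(\alpha(x))\circ r(y)=l(y\cdot x)\circ\varphi$, $r(\alpha(x))\circ l(y)=r(x\cdot y)\circ\varphi$. A representation of a Hom-Lie algebra $(\mathcal G,[\cdot,\cdot],\alpha)$ on $V$ with respect to $\psi\in\mathrm{End}(V)$ is a linear map $\rho:\mathcal G\to\mathrm{End}(V)$ with $\rho(\alpha(x))\circ\psi=\psi\circ\rho(x)$ and $\rho([x,y])\circ\psi=\rho(\alpha(x))\circ\rho(y)-\rho(\alpha(y))\circ\rho(x)$. *)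

theory Defs
  imports Complex_Main
begin

text \<open>End(V) is the space of linear maps
V to V, represented as functions 'v \<Rightarrow> 'v that are linear.\<close>

definition bilinear_map ::
  "('k::field \<Rightarrow> 'a::ab_group_add \<Rightarrow> 'a) \<Rightarrow> ('a \<Rightarrow> 'a \<Rightarrow> 'a) \<Rightarrow> bool" where
  "bilinear_map sA mult \<longleftrightarrow>
     (\<forall>x. Vector_Spaces.linear sA sA (mult x)) \<and>
     (\<forall>y. Vector_Spaces.linear sA sA (\<lambda>x. mult x y))"

definition linear_to_End ::
  "('k::field \<Rightarrow> 'a::ab_group_add \<Rightarrow> 'a) \<Rightarrow> ('k \<Rightarrow> 'v::ab_group_add \<Rightarrow> 'v)
   \<Rightarrow> ('a \<Rightarrow> 'v \<Rightarrow> 'v) \<Rightarrow> bool" where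
  "linear_to_End sA sV l \<longleftrightarrow>
     (\<forall>x. Vector_Spaces.linear sV sV (l x)) \<and>
     (\<forall>c x y. l (sA c x + y) = (\<lambda>v. sV c (l x v) + l y v))"

definition nearly_hom_assoc ::
  "('k::field \<Rightarrow> 'a::ab_group_add \<Rightarrow> 'a) \<Rightarrow> ('a \<Rightarrow> 'a \<Rightarrow> 'a) \<Rightarrow> ('a \<Rightarrow> 'a) \<Rightarrow> bool" where
  "nearly_hom_assoc sA mult \<alpha> \<longleftrightarrow>
     vector_space sA \<and> bilinear_map sA mult \<and> Vector_Spaces.linear sA sA \<alpha> \<and>
     (\<forall>x y z. mult (\<alpha> x) (mult y z) = mult (mult z x) (\<alpha> y))"

definition bimodule ::
  "('k::field \<Rightarrow> 'a::ab_group_add \<Rightarrow> 'a) \<Rightarrow> ('a \<Rightarrow> 'a \<Rightarrow> 'a) \<Rightarrow> ('a \<Rightarrow> 'a)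
   \<Rightarrow> ('k \<Rightarrow> 'v::ab_group_add \<Rightarrow> 'v) \<Rightarrow> ('a \<Rightarrow> 'v \<Rightarrow> 'v) \<Rightarrow> ('a \<Rightarrow> 'v \<Rightarrow> 'v) \<Rightarrow> ('v \<Rightarrow> 'v) \<Rightarrow> bool" where
  "bimodule sA mult \<alpha> sV l r \<phi> \<longleftrightarrow>
     vector_space sV \<and> linear_to_End sA sV l \<and> linear_to_End sA sV r \<and>
     Vector_Spaces.linear sV sV \<phi> \<and>
     (\<forall>x. \<phi> \<circ> l x = l (\<alpha> x) \<circ> \<phi>) \<and>
     (\<forall>x. \<phi> \<circ> r x = r (\<alpha> x) \<circ> \<phi>) \<and>
     (\<forall>x y. l (\<alpha> x) \<circ> l y = r (\<alpha> y) \<circ> r x) \<and>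
     (\<forall>x y. l (\<alpha> x) \<circ> r y = l (mult y x) \<circ> \<phi>) \<and>
     (\<forall>x y. r (\<alpha> x) \<circ> l y = r (mult x y) \<circ> \<phi>)"

definition commutator :: "('a::ab_group_add \<Rightarrow> 'a \<Rightarrow> 'a) \<Rightarrow> 'a \<Rightarrow> 'a \<Rightarrow> 'a" where
  "commutator mult x y = mult x y - mult y x"

definition hom_lie_representation ::
  "('k::field \<Rightarrow> 'a::ab_group_add \<Rightarrow> 'a) \<Rightarrow> ('a \<Rightarrow> 'a \<Rightarrow> 'a) \<Rightarrow> ('a \<Rightarrow> 'a)
   \<Rightarrow> ('k \<Rightarrow> 'v::ab_group_add \<Rightarrow> 'v) \<Rightarrow> ('a \<Rightarrow> 'v \<Rightarrow> 'v) \<Rightarrow> ('v \<Rightarrow> 'v) \<Rightarrow> bool" where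
  "hom_lie_representation sG br \<alpha> sV \<rho> \<psi> \<longleftrightarrow>
     linear_to_End sG sV \<rho> \<and>
     (\<forall>x. \<rho> (\<alpha> x) \<circ> \<psi> = \<psi> \<circ> \<rho> x) \<and>
     (\<forall>x y. \<rho> (br x y) \<circ> \<psi> =
            (\<lambda>v. (\<rho> (\<alpha> x) \<circ> \<rho> y) v - (\<rho> (\<alpha> y) \<circ> \<rho> x) v))"

end

theory Submission
  imports Defs
begin

text \<open>Expanding \<open>(l - r)([x,y]) \<circ> \<phi>\<close> by linearity
of \<open>l\<close> and \<open>r\<close> gives the four terms \<open>l(xy)\<phi>, l(yx)\<phi>, r(xy)\<phi>, r(yx)\<phi>\<close>, which the two mixed
axioms turn into the mixed products of \<open>(l - r)(\<alpha> x) \<circ> (l - r)(y) - (l - r)(\<alpha> y) \<circ> (l - r)(x)\<close>;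
the remaining products \<open>l(\<alpha> x) l(y), l(\<alpha> y) l(x)\<close> cancel against \<open>r(\<alpha> y) r(x), r(\<alpha> x) r(y)\<close>
by the third axiom.\<close>

lemma linear_diff_apply:
  assumes "Vector_Spaces.linear s1 s2 f"
  shows "f (a - b) = f a - f b"
  using assms by (metis module_hom.diff module_hom_iff_linear)

lemma linear_to_End_diff:
  assumes "vector_space sA" and "vector_space sV" and "linear_to_End sA sV l"
  shows "l (x - y) v = l x v - l y v"
proof -
  interpret A: vector_space sA by fact
  interpret V: vector_space sV by fact
  have "l (sA (-1) y + x) = (\<lambda>v. sV (-1) (l y v) + l x v)"
    using assms(3) unfolding linear_to_End_def by blast
  then show ?thesis by simp
qed

lemma linear_to_End_sub:
  assumes "vector_space sV" and "linear_to_End sA sV l" and "linear_to_End sA sV r"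
  shows "linear_to_End sA sV (\<lambda>x v. l x v - r x v)"
proof -
  interpret V: vector_space sV by fact
  interpret VV: vector_space_pair sV sV by unfold_locales
  have "\<And>x. Vector_Spaces.linear sV sV (\<lambda>v. l x v - r x v)"
    using assms(2,3) unfolding linear_to_End_def by (blast intro: VV.linear_compose_sub)
  moreover have "\<And>c x y. (\<lambda>v. l (sA c x + y) v - r (sA c x + y) v)
                         = (\<lambda>v. sV c (l x v - r x v) + (l y v - r y v))"
    using assms(2,3) unfolding linear_to_End_def by (simp add: V.scale_right_diff_distrib algebra_simps)
  ultimately show ?thesis
    unfolding linear_to_End_def by blast
qed

lemma bimodule_diff_commutes_twist:
  assumes "bimodule sA mult \<alpha> sV l r \<phi>"
  shows "(\<lambda>v. l (\<alpha> x) v - r (\<alpha> x) v) \<circ> \<phi> = \<phi> \<circ> (\<lambda>v. l x v - r x v)"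
proof
  fix v
  have "Vector_Spaces.linear sV sV \<phi>"
    and "\<phi> (l x v) = l (\<alpha> x) (\<phi> v)" and "\<phi> (r x v) = r (\<alpha> x) (\<phi> v)"
    using assms unfolding bimodule_def comp_def by (metis (no_types))+
  then show "((\<lambda>v. l (\<alpha> x) v - r (\<alpha> x) v) \<circ> \<phi>) v = (\<phi> \<circ> (\<lambda>v. l x v - r x v)) v"
    by (simp add: linear_diff_apply)
qed

lemma bimodule_diff_bracket:
  assumes "vector_space sA" and "bimodule sA mult \<alpha> sV l r \<phi>"
  shows "l (commutator mult x y) (\<phi> v) - r (commutator mult x y) (\<phi> v)
       = (l (\<alpha> x) (l y v - r y v) - r (\<alpha> x) (l y v - r y v))
       - (l (\<alpha> y) (l x v - r x v) - r (\<alpha> y) (l x v - r x v))"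
proof -
  have vV: "vector_space sV" and L: "linear_to_End sA sV l" and R: "linear_to_End sA sV r"
    and ll: "\<And>x y. l (\<alpha> x) \<circ> l y = r (\<alpha> y) \<circ> r x"
    and lr: "\<And>x y. l (\<alpha> x) \<circ> r y = l (mult y x) \<circ> \<phi>"
    and rl: "\<And>x y. r (\<alpha> x) \<circ> l y = r (mult x y) \<circ> \<phi>"
    using assms(2) unfolding bimodule_def by blast+
  have "\<And>x. Vector_Spaces.linear sV sV (l x)" "\<And>x. Vector_Spaces.linear sV sV (r x)"
    using L R unfolding linear_to_End_def by blast+
  then have lin: "\<And>x a b. l x (a - b) = l x a - l x b" "\<And>x a b. r x (a - b) = r x a - r x b"
    by (blast intro: linear_diff_apply)+
  have quadratic: "l (\<alpha> x) (l y v) = r (\<alpha> y) (r x v)" "l (\<alpha> y) (l x v) = r (\<alpha> x) (r y v)"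
    using ll by (metis comp_apply)+
  have mixed: "l (\<alpha> x) (r y v) = l (mult y x) (\<phi> v)" "l (\<alpha> y) (r x v) = l (mult x y) (\<phi> v)"
    "r (\<alpha> x) (l y v) = r (mult x y) (\<phi> v)" "r (\<alpha> y) (l x v) = r (mult y x) (\<phi> v)"
    using lr rl by (metis comp_apply)+
  show ?thesis
    by (simp add: commutator_def linear_to_End_diff[OF assms(1) vV L]
        linear_to_End_diff[OF assms(1) vV R] lin quadratic mixed algebra_simps)
qed

lemma bimodule_diff_hom_lie_representation:
  assumes "vector_space sA" and "bimodule sA mult \<alpha> sV l r \<phi>"
  shows "hom_lie_representation sA (commutator mult) \<alpha> sV (\<lambda>x v. l x v - r x v) \<phi>"
proof -
  have "linear_to_End sA sV (\<lambda>x v. l x v - r x v)"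
    using assms(2) linear_to_End_sub unfolding bimodule_def by blast
  moreover have "(\<lambda>v. l (commutator mult x y) v - r (commutator mult x y) v) \<circ> \<phi>
      = (\<lambda>v. ((\<lambda>v. l (\<alpha> x) v - r (\<alpha> x) v) \<circ> (\<lambda>v. l y v - r y v)) v
           - ((\<lambda>v. l (\<alpha> y) v - r (\<alpha> y) v) \<circ> (\<lambda>v. l x v - r x v)) v)" for x y
    using bimodule_diff_bracket[OF assms] by auto
  ultimately show ?thesis
    unfolding hom_lie_representation_def
    using bimodule_diff_commutes_twist[OF assms(2)] by blast
qed

theorem mainTheorem12:
  fixes sA :: "'k::field_char_0 \<Rightarrow> 'a::ab_group_add \<Rightarrow> 'a"
    and mult :: "'a \<Rightarrow> 'a \<Rightarrow> 'a" and \<alpha> :: "'a \<Rightarrow> 'a"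
    and sV :: "'k \<Rightarrow> 'v::ab_group_add \<Rightarrow> 'v"
    and l r :: "'a \<Rightarrow> 'v \<Rightarrow> 'v" and \<phi> :: "'v \<Rightarrow> 'v"
  assumes "nearly_hom_assoc sA mult \<alpha>"
    and "\<exists>B. finite_dimensional_vector_space sV B"
    and "bimodule sA mult \<alpha> sV l r \<phi>"
  shows "hom_lie_representation sA (commutator mult) \<alpha> sV (\<lambda>x v. l x v - r x v) \<phi>"
proof -
  have "vector_space sA"
    using assms(1) unfolding nearly_hom_assoc_def by blast
  then show ?thesis
    using bimodule_diff_hom_lie_representation assms(3) by blast
qed

end
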